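(* Let $\mu_1,\mu_2\in\mathbb{R}$ and $\sigma_1^2,\sigma_2^2\in\mathbb{R}_+\setminus\{0\}$ be such that $\gamma_1:=\lfloor \mu_1-\sigma_1^2\rfloor\le\gamma_2:=\lfloor \mu_2-\sigma_2^2\rfloor$. Then \[ \|\mathrm{TP}(\mu_1,\sigma_1^2)-\mathrm{TP}(\mu_2,\sigma_2^2)\|\le 2\left\{\sigma_1^{-1}|\mu_1-\mu_2|+\sigma_1^{-2}\left(|\sigma_1^2-\sigma_2^2|+1\right)\right\}. \]
   Context: For $\mu\in\mathbb{R}$ and $\sigma^2\ge 0$ set $\gamma(\mu,\sigma^2):=\lfloor\mu-\sigma^2\rfloor$, $\delta(\mu,\sigma^2):=\mu-\sigma^2-\gamma(\mu,\sigma^2)\in[0,1)$ and $\lambda'(\mu,\sigma^2):=\sigma^2+\delta(\mu,\sigma^2)$. The translated Poisson distribution $\mathrm{TP}(\mu,\sigma^2)$ is the probability measure on $\mathbb{Z}$ given by $\mathrm{TP}(\mu,\sigma^2)\{j\}:=\mathrm{Po}(\lambda'(\mu,\sigma^2))\{j-\gamma(\mu,\sigma^2)\}$, $j\in\mathbb{Z}$, where $\mathrm{Po}(\lambda)$ is the Poisson distribution with mean $\lambda$ (so it has mean $\mu$ and variance $\lambda'$). For probability measures $Q,Q'$ on $\mathbb{Z}$, $\|Q-Q'\|:=\sum_{i\in\mathbb{Z}}|Q(i)-Q'(i)|=2\sup_{A\subset\mathbb{Z}}|Q(A)-Q'(A)|$. *)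

theory Defs
  imports "HOL-Analysis.Analysis"
begin

definition poisson_pmf_int :: "real \<Rightarrow> int \<Rightarrow> real" where
  "poisson_pmf_int lam k =
     (if k < 0 then 0 else exp (- lam) * lam ^ nat k / fact (nat k))"

definition tp_gamma :: "real \<Rightarrow> real \<Rightarrow> int" where
  "tp_gamma mu s2 = \<lfloor>mu - s2\<rfloor>"

definition tp_delta :: "real \<Rightarrow> real \<Rightarrow> real" where
  "tp_delta mu s2 = mu - s2 - real_of_int (tp_gamma mu s2)"

definition tp_lambda' :: "real \<Rightarrow> real \<Rightarrow> real" where
  "tp_lambda' mu s2 = s2 + tp_delta mu s2"

definition TP :: "real \<Rightarrow> real \<Rightarrow> int \<Rightarrow> real" where
  "TP mu s2 j = poisson_pmf_int (tp_lambda' mu s2) (j - tp_gamma mu s2)"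

definition tv_norm :: "(int \<Rightarrow> real) \<Rightarrow> (int \<Rightarrow> real) \<Rightarrow> real" where
  "tv_norm Q Q' = (\<Sum>\<^sub>\<infinity>i\<in>(UNIV::int set). \<bar>Q i - Q' i\<bar>)"

end

theory Submission
  imports Defs
begin

text \<open>
  \<open>TP(\<mu>\<^sub>i, \<sigma>\<^sub>i\<^sup>2)\<close> is \<open>Po(l\<^sub>i)\<close> translated by \<open>\<gamma>\<^sub>i\<close>, with \<open>\<sigma>\<^sub>i\<^sup>2 \<le> l\<^sub>i < \<sigma>\<^sub>i\<^sup>2 + 1\<close>. Removing the
  common translation \<open>\<gamma>\<^sub>1\<close>, we compare \<open>Po(l\<^sub>1)\<close> with \<open>Po(l\<^sub>2)\<close> translated by \<open>k = \<gamma>\<^sub>2 - \<gamma>\<^sub>1 \<ge> 0\<close>,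
  where \<open>l\<^sub>1 + d = l\<^sub>2 + k\<close> for \<open>d = \<mu>\<^sub>2 - \<mu>\<^sub>1\<close>, and pass through \<open>Po(l\<^sub>1 + d)\<close>.
  Changing the rate by \<open>|d|\<close> costs at most \<open>|d| / \<surd>l\<close>: write the larger Poisson law as a
  mixture of translates of the smaller one, and note that a unit translate of \<open>Po(a)\<close> is
  at distance \<open>E|N - a| / a \<le> 1/\<surd>a\<close> by Cauchy--Schwarz.
  Comparing \<open>Po(\<lambda>)\<close> with \<open>Po(\<lambda> - k)\<close> translated by \<open>k\<close> costs at most \<open>2k/\<lambda>\<close>: the
  translated law satisfies the Poisson Stein identity up to an error \<open>k \<Delta>g\<close>, and the
  increments of the solution \<open>g\<close> of the Stein equation for an indicator are bounded by
  \<open>1/\<lambda>\<close>. Elementary inequalities, together with the trivial bound 2, turn the two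
  estimates into the stated one.
\<close>

definition poisson_mass :: "real \<Rightarrow> nat \<Rightarrow> real" where
  "poisson_mass a n = exp (- a) * a ^ n / fact n"

lemma poisson_mass_nonneg: "a \<ge> 0 \<Longrightarrow> poisson_mass a n \<ge> 0"
  by (simp add: poisson_mass_def)

lemma poisson_mass_pos: "a > 0 \<Longrightarrow> poisson_mass a n > 0"
  by (simp add: poisson_mass_def)

lemma poisson_mass_Suc: "poisson_mass a (Suc n) = poisson_mass a n * a / real (Suc n)"
  by (simp add: poisson_mass_def field_simps)

lemma poisson_mass_Suc_mult: "real (Suc n) * poisson_mass a (Suc n) = a * poisson_mass a n"
  unfolding poisson_mass_Suc by (simp add: field_simps del: of_nat_Suc)

lemma poisson_pmf_int_of_nat: "poisson_pmf_int a (int n) = poisson_mass a n"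
  by (simp add: poisson_pmf_int_def poisson_mass_def)

lemma poisson_pmf_int_neg: "i < 0 \<Longrightarrow> poisson_pmf_int a i = 0"
  by (simp add: poisson_pmf_int_def)

lemma poisson_pmf_int_nonneg: "a \<ge> 0 \<Longrightarrow> poisson_pmf_int a i \<ge> 0"
  by (simp add: poisson_pmf_int_def)

lemma sums_poisson_mass: "poisson_mass a sums 1"
proof -
  have "(\<lambda>n. a ^ n / fact n) sums exp a"
    using exp_converges[of a] by (simp add: divide_inverse scaleR_conv_of_real mult.commute)
  then have "(\<lambda>n. exp (- a) * (a ^ n / fact n)) sums (exp (- a) * exp a)"
    by (rule sums_mult)
  moreover have "poisson_mass a = (\<lambda>n. exp (- a) * (a ^ n / fact n))"
    by (simp add: poisson_mass_def fun_eq_iff)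
  ultimately show ?thesis by (simp add: exp_minus)
qed

lemma sums_poisson_mean: "(\<lambda>n. real n * poisson_mass a n) sums a"
proof -
  have "(\<lambda>n. real (Suc n) * poisson_mass a (Suc n)) sums (a * 1)"
    unfolding poisson_mass_Suc_mult by (rule sums_mult[OF sums_poisson_mass])
  then show ?thesis by (subst (asm) sums_Suc_iff) simp
qed

lemma sums_poisson_second_moment: "(\<lambda>n. (real n)\<^sup>2 * poisson_mass a n) sums (a * (a + 1))"
proof -
  have "(\<lambda>n. a * (real n * poisson_mass a n + poisson_mass a n)) sums (a * (a + 1))"
    by (intro sums_mult sums_add sums_poisson_mean sums_poisson_mass)
  moreover have "a * (real n * poisson_mass a n + poisson_mass a n)
      = (real (Suc n))\<^sup>2 * poisson_mass a (Suc n)" for n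
  proof -
    have "(real (Suc n))\<^sup>2 * poisson_mass a (Suc n)
        = real (Suc n) * (real (Suc n) * poisson_mass a (Suc n))"
      by (simp add: power2_eq_square)
    also have "\<dots> = real (Suc n) * (a * poisson_mass a n)"
      by (simp only: poisson_mass_Suc_mult)
    finally show ?thesis by (simp add: algebra_simps)
  qed
  ultimately have "(\<lambda>n. (real (Suc n))\<^sup>2 * poisson_mass a (Suc n)) sums (a * (a + 1))"
    by simp
  then show ?thesis by (subst (asm) sums_Suc_iff) simp
qed

lemma sums_poisson_variance: "(\<lambda>n. poisson_mass a n * (real n - a)\<^sup>2) sums a"
proof -
  have "(\<lambda>n. (real n)\<^sup>2 * poisson_mass a n - 2 * a * (real n * poisson_mass a n)
              + a\<^sup>2 * poisson_mass a n) sums (a * (a + 1) - 2 * a * a + a\<^sup>2 * 1)"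
    by (intro sums_add sums_diff sums_mult sums_poisson_second_moment sums_poisson_mean
        sums_poisson_mass)
  then show ?thesis by (simp add: power2_eq_square algebra_simps)
qed

lemma sum_poisson_mass_le_1: "a \<ge> 0 \<Longrightarrow> finite I \<Longrightarrow> sum (poisson_mass a) I \<le> 1"
  using sum_le_suminf[of "poisson_mass a" I] sums_poisson_mass[of a]
  by (auto simp: sums_iff poisson_mass_nonneg)

lemma poisson_mass_le_1: "a \<ge> 0 \<Longrightarrow> poisson_mass a n \<le> 1"
  using sum_poisson_mass_le_1[of a "{n}"] by simp

lemma poisson_pmf_int_le_1: "a \<ge> 0 \<Longrightarrow> poisson_pmf_int a i \<le> 1"
  by (cases i) (simp_all add: poisson_pmf_int_of_nat poisson_mass_le_1 poisson_pmf_int_neg)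

lemma sum_poisson_variance_le:
  "a \<ge> 0 \<Longrightarrow> (\<Sum>n\<le>N. poisson_mass a n * (real n - a)\<^sup>2) \<le> a"
  using sum_le_suminf[of "\<lambda>n. poisson_mass a n * (real n - a)\<^sup>2" "{..N}"]
    sums_poisson_variance[of a]
  by (auto simp: sums_iff poisson_mass_nonneg)

lemma sum_poisson_abs_deviation_le:
  assumes a: "a > 0"
  shows "(\<Sum>n\<le>N. poisson_mass a n * \<bar>real n - a\<bar>) \<le> sqrt a"
proof -
  let ?p = "poisson_mass a"
  have "(\<Sum>n\<le>N. ?p n * \<bar>real n - a\<bar>)\<^sup>2
      = (\<Sum>n\<le>N. sqrt (?p n) * (sqrt (?p n) * \<bar>real n - a\<bar>))\<^sup>2"
    using a by (simp add: poisson_mass_nonneg mult.assoc[symmetric])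
  also have "\<dots> \<le> (\<Sum>n\<le>N. (sqrt (?p n))\<^sup>2) * (\<Sum>n\<le>N. (sqrt (?p n) * \<bar>real n - a\<bar>)\<^sup>2)"
    by (rule Cauchy_Schwarz_ineq_sum)
  also have "\<dots> = (\<Sum>n\<le>N. ?p n) * (\<Sum>n\<le>N. ?p n * (real n - a)\<^sup>2)"
    using a by (simp add: poisson_mass_nonneg power_mult_distrib)
  also have "\<dots> \<le> 1 * a"
    using a by (intro mult_mono sum_poisson_mass_le_1 sum_poisson_variance_le)
      (auto intro: sum_nonneg simp: poisson_mass_nonneg)
  finally show ?thesis using real_le_rsqrt by simp
qed

lemma sum_int_le_of_nat_partial_sums:
  fixes f :: "int \<Rightarrow> real"
  assumes nonneg: "\<And>i. f i \<ge> 0" and neg: "\<And>i. i < 0 \<Longrightarrow> f i = 0"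
    and partial: "\<And>N. (\<Sum>n\<le>N. f (int n)) \<le> B" and G: "finite G"
  shows "sum f G \<le> B"
proof -
  define S where "S = nat ` (G \<inter> {0..})"
  have "finite S" using G by (simp add: S_def)
  have "sum f G = sum f (G \<inter> {0..})"
    using G by (intro sum.mono_neutral_right) (auto, metis neg not_le)
  also have "G \<inter> {0..} = int ` S" by (force simp: S_def image_iff)
  also have "sum f (int ` S) = (\<Sum>n\<in>S. f (int n))" by (simp add: sum.reindex)
  also have "\<dots> \<le> (\<Sum>n\<le>Max (insert 0 S). f (int n))"
    using \<open>finite S\<close> nonneg by (intro sum_mono2) auto
  also have "\<dots> \<le> B" by (rule partial)
  finally show ?thesis .
qed

lemma sum_poisson_pmf_int_le_1:
  "a \<ge> 0 \<Longrightarrow> finite G \<Longrightarrow> (\<Sum>i\<in>G. poisson_pmf_int a i) \<le> 1"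
  by (rule sum_int_le_of_nat_partial_sums)
    (auto simp: poisson_pmf_int_neg poisson_pmf_int_nonneg poisson_pmf_int_of_nat
      sum_poisson_mass_le_1)


lemma sum_abs_poisson_step_le:
  assumes a: "a > 0" and G: "finite G"
  shows "(\<Sum>j\<in>G. \<bar>poisson_pmf_int a (j - 1) - poisson_pmf_int a j\<bar>) \<le> 1 / sqrt a"
proof (rule sum_int_le_of_nat_partial_sums[OF _ _ _ G])
  fix N
  let ?p = "poisson_mass a"
  have step: "\<bar>poisson_pmf_int a (int n - 1) - poisson_pmf_int a (int n)\<bar>
      = ?p n * \<bar>real n - a\<bar> / a" for n
  proof (cases n)
    case 0
    then show ?thesis
      using a poisson_pmf_int_of_nat[of a 0]
      by (simp add: poisson_pmf_int_neg poisson_mass_nonneg)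
  next
    case (Suc m)
    have "poisson_pmf_int a (int (Suc m) - 1) = ?p m"
      using poisson_pmf_int_of_nat[of a m] by simp
    also have "?p m = ?p (Suc m) * real (Suc m) / a"
      using a by (simp add: poisson_mass_Suc)
    finally have "poisson_pmf_int a (int (Suc m) - 1) - poisson_pmf_int a (int (Suc m))
        = ?p (Suc m) * (real (Suc m) - a) / a"
      using a by (simp add: poisson_pmf_int_of_nat right_diff_distrib diff_divide_distrib
          del: of_nat_Suc)
    then show ?thesis
      unfolding Suc using a poisson_mass_nonneg[of a "Suc m"]
      by (simp add: abs_mult del: of_nat_Suc)
  qed
  have "(\<Sum>n\<le>N. \<bar>poisson_pmf_int a (int n - 1) - poisson_pmf_int a (int n)\<bar>)
      = (\<Sum>n\<le>N. ?p n * \<bar>real n - a\<bar>) / a"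
    unfolding step sum_divide_distrib by (rule refl)
  also have "\<dots> \<le> sqrt a / a"
    using a sum_poisson_abs_deviation_le[OF a] by (simp add: divide_right_mono)
  also have "sqrt a / a = 1 / sqrt a"
    using a by (simp add: field_simps flip: real_sqrt_mult)
  finally show "(\<Sum>n\<le>N. \<bar>poisson_pmf_int a (int n - 1) - poisson_pmf_int a (int n)\<bar>)
      \<le> 1 / sqrt a" .
qed (auto simp: poisson_pmf_int_neg)

lemma sum_abs_poisson_shift_le:
  assumes a: "a > 0" and F: "finite F"
  shows "(\<Sum>i\<in>F. \<bar>poisson_pmf_int a (i - int m) - poisson_pmf_int a i\<bar>) \<le> real m / sqrt a"
proof (induction m)
  case 0
  then show ?case by simp
next
  case (Suc m)
  let ?P = "poisson_pmf_int a"
  have "(\<Sum>i\<in>F. \<bar>?P (i - int (Suc m)) - ?P i\<bar>)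
     \<le> (\<Sum>i\<in>F. \<bar>?P (i - int m - 1) - ?P (i - int m)\<bar> + \<bar>?P (i - int m) - ?P i\<bar>)"
    by (intro sum_mono) (simp add: algebra_simps)
  also have "\<dots> = (\<Sum>j\<in>(\<lambda>i. i - int m) ` F. \<bar>?P (j - 1) - ?P j\<bar>)
      + (\<Sum>i\<in>F. \<bar>?P (i - int m) - ?P i\<bar>)"
    by (simp add: sum.distrib sum.reindex inj_on_def)
  also have "\<dots> \<le> 1 / sqrt a + real m / sqrt a"
    using sum_abs_poisson_step_le[OF a] F Suc.IH by (intro add_mono) auto
  finally show ?case by (simp add: add_divide_distrib)
qed

lemma poisson_mass_add:
  "poisson_mass (a + t) n = (\<Sum>m\<le>n. poisson_mass t m * poisson_mass a (n - m))"
proof -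
  have "(a + t) ^ n = (\<Sum>m\<le>n. of_nat (n choose m) * t ^ m * a ^ (n - m))"
    by (subst add.commute) (rule binomial_ring)
  then have "poisson_mass (a + t) n
      = (\<Sum>m\<le>n. exp (- t) * exp (- a) * (of_nat (n choose m) * t ^ m * a ^ (n - m)) / fact n)"
    by (simp add: poisson_mass_def exp_add[symmetric] sum_distrib_left sum_divide_distrib
        add.commute)
  also have "\<dots> = (\<Sum>m\<le>n. poisson_mass t m * poisson_mass a (n - m))"
    by (intro sum.cong refl) (simp add: binomial_fact poisson_mass_def field_simps)
  finally show ?thesis .
qed

lemma sums_poisson_convolution:
  "(\<lambda>m. poisson_mass t m * poisson_pmf_int a (i - int m)) sums poisson_pmf_int (a + t) i"
proof (cases "i < 0")
  case True
  then show ?thesis by (simp add: poisson_pmf_int_neg)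
next
  case False
  then obtain n where i: "i = int n" by (metis nonneg_int_cases not_less)
  have "(\<lambda>m. poisson_mass t m * poisson_pmf_int a (i - int m))
      sums (\<Sum>m\<le>n. poisson_mass t m * poisson_pmf_int a (i - int m))"
    by (rule sums_finite) (auto simp: i poisson_pmf_int_neg)
  also have "(\<Sum>m\<le>n. poisson_mass t m * poisson_pmf_int a (i - int m))
      = (\<Sum>m\<le>n. poisson_mass t m * poisson_mass a (n - m))"
    by (intro sum.cong refl) (simp add: i of_nat_diff poisson_pmf_int_of_nat flip: of_nat_diff)
  also have "\<dots> = poisson_pmf_int (a + t) i"
    by (simp add: i poisson_pmf_int_of_nat poisson_mass_add)
  finally show ?thesis .
qed

lemma sum_abs_suminf_le:
  fixes X :: "'a \<Rightarrow> nat \<Rightarrow> real"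
  assumes "\<And>i. summable (\<lambda>m. \<bar>X i m\<bar>)"
  shows "(\<Sum>i\<in>F. \<bar>\<Sum>m. X i m\<bar>) \<le> (\<Sum>m. \<Sum>i\<in>F. \<bar>X i m\<bar>)"
proof -
  have "(\<Sum>i\<in>F. \<bar>\<Sum>m. X i m\<bar>) \<le> (\<Sum>i\<in>F. \<Sum>m. \<bar>X i m\<bar>)"
    by (intro sum_mono summable_rabs assms)
  also have "\<dots> = (\<Sum>m. \<Sum>i\<in>F. \<bar>X i m\<bar>)"
    by (rule suminf_sum[symmetric]) (rule assms)
  finally show ?thesis .
qed

text \<open>\<open>Po(a + t)\<close> is the mixture over \<open>m \<sim> Po(t)\<close> of \<open>Po(a)\<close> translated by \<open>m\<close>.\<close>

lemma sum_abs_poisson_rate_increase_le: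
  assumes a: "a > 0" and t: "t \<ge> 0" and F: "finite F"
  shows "(\<Sum>i\<in>F. \<bar>poisson_pmf_int (a + t) i - poisson_pmf_int a i\<bar>) \<le> t / sqrt a"
proof -
  let ?P = "poisson_pmf_int a" and ?q = "poisson_mass t"
  define X where "X i m = ?q m * (?P (i - int m) - ?P i)" for i m
  have X_sums: "X i sums (poisson_pmf_int (a + t) i - ?P i)" for i
  proof -
    have "(\<lambda>m. ?q m * ?P (i - int m) - ?q m * ?P i) sums (poisson_pmf_int (a + t) i - 1 * ?P i)"
      by (intro sums_diff sums_poisson_convolution sums_mult2 sums_poisson_mass)
    then show ?thesis by (simp add: X_def[abs_def] right_diff_distrib)
  qed
  have X_abs_summable: "summable (\<lambda>m. \<bar>X i m\<bar>)" for i
  proof (rule summable_comparison_test')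
    show "summable (\<lambda>m. 2 * ?q m)"
      using sums_poisson_mass summable_mult sums_summable by blast
    fix m
    have "\<bar>?P (i - int m) - ?P i\<bar> \<le> 2"
      using poisson_pmf_int_le_1[of a] poisson_pmf_int_nonneg[of a] a
      by (smt (verit))
    then show "norm \<bar>X i m\<bar> \<le> 2 * ?q m"
      using poisson_mass_nonneg[OF t, of m] mult_left_mono[of _ 2 "?q m"]
      by (simp add: X_def abs_mult mult.commute[of "?q m"])
  qed
  have "(\<Sum>i\<in>F. \<bar>poisson_pmf_int (a + t) i - ?P i\<bar>) = (\<Sum>i\<in>F. \<bar>suminf (X i)\<bar>)"
    using X_sums by (simp add: sums_iff)
  also have "\<dots> \<le> (\<Sum>m. \<Sum>i\<in>F. \<bar>X i m\<bar>)"
    by (rule sum_abs_suminf_le[OF X_abs_summable])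
  also have "\<dots> \<le> (\<Sum>m. real m * ?q m * (1 / sqrt a))"
  proof (rule suminf_le)
    fix m
    have "(\<Sum>i\<in>F. \<bar>X i m\<bar>) = ?q m * (\<Sum>i\<in>F. \<bar>?P (i - int m) - ?P i\<bar>)"
      using poisson_mass_nonneg[OF t, of m] by (simp add: X_def abs_mult sum_distrib_left)
    also have "\<dots> \<le> ?q m * (real m / sqrt a)"
      by (intro mult_left_mono sum_abs_poisson_shift_le a F poisson_mass_nonneg t)
    finally show "(\<Sum>i\<in>F. \<bar>X i m\<bar>) \<le> real m * ?q m * (1 / sqrt a)"
      by (simp add: mult_ac)
  next
    show "summable (\<lambda>m. \<Sum>i\<in>F. \<bar>X i m\<bar>)" by (intro summable_sum X_abs_summable)
  next
    show "summable (\<lambda>m. real m * ?q m * (1 / sqrt a))"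
      using sums_poisson_mean[of t] by (intro summable_mult2) (simp add: sums_summable)
  qed
  also have "\<dots> = t * (1 / sqrt a)"
    using sums_mult2[OF sums_poisson_mean[of t], of "1 / sqrt a"] by (simp add: sums_iff)
  finally show ?thesis by simp
qed

lemma sum_abs_poisson_rate_change_le:
  assumes "a > 0" and "a + d > 0" and "finite F"
  shows "(\<Sum>i\<in>F. \<bar>poisson_pmf_int a i - poisson_pmf_int (a + d) i\<bar>) \<le> \<bar>d\<bar> / sqrt (min a (a + d))"
proof (cases "d \<ge> 0")
  case True
  then show ?thesis
    using sum_abs_poisson_rate_increase_le[of a d F] assms by (simp add: abs_minus_commute min_def)
next
  case False
  then show ?thesis
    using sum_abs_poisson_rate_increase_le[of "a + d" "- d" F] assms by (simp add: min_def)
qed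


definition poisson_cdf :: "real \<Rightarrow> nat \<Rightarrow> real" where
  "poisson_cdf a j = (\<Sum>i\<le>j. poisson_mass a i)"

text \<open>\<open>stein_weight lam i r\<close> is the contribution of the point \<open>r \<in> A\<close> to \<open>\<lambda> \<Delta>g(i + 1)\<close>,
  where \<open>g\<close> is the Stein solution for the indicator of \<open>A\<close> (see \<open>stein_solution_increment\<close>).\<close>

definition stein_weight :: "real \<Rightarrow> nat \<Rightarrow> nat \<Rightarrow> real" where
  "stein_weight lam i r =
     (of_bool (r \<le> Suc i) - poisson_cdf lam (Suc i)) / poisson_mass lam (Suc i)
     - (of_bool (r \<le> i) - poisson_cdf lam i) / poisson_mass lam i"

context
  fixes lam :: real
  assumes lam: "lam > 0"
begin

lemma poisson_cdf_nonneg: "poisson_cdf lam j \<ge> 0"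
  unfolding poisson_cdf_def using lam by (intro sum_nonneg) (simp add: poisson_mass_nonneg)

lemma poisson_cdf_le_1: "poisson_cdf lam j \<le> 1"
  unfolding poisson_cdf_def using lam by (intro sum_poisson_mass_le_1) auto

lemma poisson_cdf_mult_le: "poisson_cdf lam j * lam \<le> real (Suc j) * poisson_cdf lam (Suc j)"
proof -
  have "poisson_cdf lam j * lam = (\<Sum>i\<le>j. real (Suc i) * poisson_mass lam (Suc i))"
    unfolding poisson_cdf_def sum_distrib_right
    by (intro sum.cong refl, subst poisson_mass_Suc_mult) (simp add: mult.commute)
  also have "\<dots> \<le> (\<Sum>i\<le>j. real (Suc j) * poisson_mass lam (Suc i))"
    using lam by (intro sum_mono mult_right_mono) (auto simp: poisson_mass_nonneg)
  also have "\<dots> \<le> real (Suc j) * poisson_cdf lam (Suc j)"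
    unfolding poisson_cdf_def sum.atMost_Suc_shift sum_distrib_left[symmetric]
    using lam by (intro mult_left_mono) (auto simp: poisson_mass_nonneg)
  finally show ?thesis .
qed

lemma poisson_cdf_ratio_mono:
  "poisson_cdf lam j / poisson_mass lam j \<le> poisson_cdf lam (Suc j) / poisson_mass lam (Suc j)"
  using poisson_cdf_mult_le[of j] poisson_mass_pos[OF lam, of j] lam
  by (simp add: poisson_mass_Suc field_simps del: of_nat_Suc)

lemma sum_poisson_mean_partial:
  "(\<Sum>i\<le>Suc j. real i * poisson_mass lam i) = lam * poisson_cdf lam j"
  unfolding poisson_cdf_def sum.atMost_Suc_shift
  by (simp add: poisson_mass_Suc_mult sum_distrib_left del: of_nat_Suc)

lemma poisson_tail_ratio_antimono_Suc:
  "(1 - poisson_cdf lam (Suc j)) / poisson_mass lam (Suc j) \<le> (1 - poisson_cdf lam j) / poisson_mass lam j"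
proof -
  let ?p = "poisson_mass lam"
  define k where "k = Suc (Suc j)"
  have k: "{..<k} = {..Suc j}" by (auto simp: k_def)
  have mean_summable: "summable (\<lambda>i. real i * ?p i)"
    using sums_poisson_mean sums_summable by blast
  have summable: "summable ?p"
    using sums_poisson_mass sums_summable by blast
  have mean_summable': "summable (\<lambda>n. real (n + k) * ?p (n + k))"
    using mean_summable by (subst summable_iff_shift)
  have summable': "summable (\<lambda>n. ?p (n + k))"
    using summable by (subst summable_iff_shift)
  have mean_tail: "lam = (\<Sum>n. real (n + k) * ?p (n + k)) + (\<Sum>i<k. real i * ?p i)"
    using suminf_split_initial_segment[OF mean_summable, of k] sums_poisson_mean[of lam]
    by (simp add: sums_iff)
  have tail: "1 = (\<Sum>n. ?p (n + k)) + (\<Sum>i<k. ?p i)"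
    using suminf_split_initial_segment[OF summable, of k] sums_poisson_mass[of lam]
    by (simp add: sums_iff)
  have "real (Suc j) * (1 - poisson_cdf lam (Suc j)) = (\<Sum>n. real (Suc j) * ?p (n + k))"
    using tail k by (simp add: poisson_cdf_def suminf_mult[OF summable'] del: of_nat_Suc)
  also have "\<dots> \<le> (\<Sum>n. real (n + k) * ?p (n + k))"
    using mean_summable' summable' lam
    by (intro suminf_le mult_right_mono) (auto simp: k_def poisson_mass_nonneg intro: summable_mult)
  also have "\<dots> = lam * (1 - poisson_cdf lam j)"
    using mean_tail k sum_poisson_mean_partial[of j] by (simp add: algebra_simps)
  finally have "real (Suc j) * (1 - poisson_cdf lam (Suc j)) \<le> lam * (1 - poisson_cdf lam j)" .
  then have "real (Suc j) * (1 - poisson_cdf lam (Suc j)) / (?p j * lam)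
      \<le> lam * (1 - poisson_cdf lam j) / (?p j * lam)"
    using poisson_mass_pos[OF lam, of j] lam by (intro divide_right_mono) auto
  then have "real (Suc j) * (1 - poisson_cdf lam (Suc j)) / (?p j * lam)
      \<le> (1 - poisson_cdf lam j) / ?p j"
    using lam by simp
  then show ?thesis
    using poisson_mass_pos[OF lam, of j] lam
    by (simp add: poisson_mass_Suc field_simps del: of_nat_Suc)
qed

lemma poisson_tail_ratio_antimono:
  "m \<le> n \<Longrightarrow> (1 - poisson_cdf lam n) / poisson_mass lam n \<le> (1 - poisson_cdf lam m) / poisson_mass lam m"
proof (induction n rule: dec_induct)
  case (step n)
  then show ?case using poisson_tail_ratio_antimono_Suc[of n] by linarith
qed simp

lemma stein_weight_nonpos: "r \<noteq> Suc i \<Longrightarrow> stein_weight lam i r \<le> 0"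
  using poisson_tail_ratio_antimono_Suc[of i] poisson_cdf_ratio_mono[of i]
  by (cases "r \<le> i") (simp_all add: stein_weight_def)

lemma stein_weight_diag_bounds:
  "0 \<le> poisson_mass lam (Suc i) * stein_weight lam i (Suc i)"
  "poisson_mass lam (Suc i) * stein_weight lam i (Suc i) \<le> 1"
proof -
  have "poisson_mass lam (Suc i) * stein_weight lam i (Suc i)
      = (1 - poisson_cdf lam (Suc i)) + poisson_cdf lam i * lam / real (Suc i)"
    using poisson_mass_pos[OF lam, of i] lam unfolding stein_weight_def
    by (simp add: poisson_mass_Suc field_simps del: of_nat_Suc)
  moreover have "poisson_cdf lam i * lam / real (Suc i) \<le> poisson_cdf lam (Suc i)"
    using poisson_cdf_mult_le[of i] by (simp add: field_simps del: of_nat_Suc)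
  ultimately show "0 \<le> poisson_mass lam (Suc i) * stein_weight lam i (Suc i)"
    "poisson_mass lam (Suc i) * stein_weight lam i (Suc i) \<le> 1"
    using poisson_cdf_le_1 poisson_cdf_nonneg[of i] lam by simp_all
qed

text \<open>This is the case \<open>A = {..M}\<close> of the decomposition of the Stein increment below.\<close>

lemma sum_stein_weight_atMost_nonneg:
  assumes iM: "Suc i \<le> M"
  shows "(\<Sum>r\<le>M. poisson_mass lam r * stein_weight lam i r) \<ge> 0"
proof -
  let ?p = "poisson_mass lam"
  have centred: "(\<Sum>r\<le>M. ?p r * (of_bool (r \<le> x) - poisson_cdf lam x))
      = poisson_cdf lam x * (1 - poisson_cdf lam M)" if "x \<le> M" for x
  proof -
    have "(\<Sum>r\<le>M. ?p r * of_bool (r \<le> x)) = (\<Sum>r\<le>M. if r \<in> {..x} then ?p r else 0)"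
      by (intro sum.cong) auto
    also have "\<dots> = sum ?p ({..M} \<inter> {..x})"
      using sum.inter_restrict[of "{..M}" ?p "{..x}"] by simp
    also have "{..M} \<inter> {..x} = {..x}"
      using that by auto
    finally have "(\<Sum>r\<le>M. ?p r * of_bool (r \<le> x)) = poisson_cdf lam x"
      by (simp add: poisson_cdf_def)
    moreover have "(\<Sum>r\<le>M. ?p r * poisson_cdf lam x) = poisson_cdf lam x * poisson_cdf lam M"
      by (simp add: poisson_cdf_def[of lam M] sum_distrib_left mult.commute)
    ultimately show ?thesis
      by (simp add: right_diff_distrib sum_subtractf algebra_simps)
  qed
  have pointwise: "?p r * stein_weight lam i r
      = ?p r * (of_bool (r \<le> Suc i) - poisson_cdf lam (Suc i)) / ?p (Suc i)
        - ?p r * (of_bool (r \<le> i) - poisson_cdf lam i) / ?p i" for r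
    by (simp add: stein_weight_def right_diff_distrib)
  have "(\<Sum>r\<le>M. ?p r * stein_weight lam i r)
      = (\<Sum>r\<le>M. ?p r * (of_bool (r \<le> Suc i) - poisson_cdf lam (Suc i))) / ?p (Suc i)
        - (\<Sum>r\<le>M. ?p r * (of_bool (r \<le> i) - poisson_cdf lam i)) / ?p i"
    by (simp only: pointwise sum_subtractf sum_divide_distrib)
  also have "\<dots> = poisson_cdf lam (Suc i) * (1 - poisson_cdf lam M) / ?p (Suc i)
        - poisson_cdf lam i * (1 - poisson_cdf lam M) / ?p i"
    by (simp only: centred[OF iM] centred[OF Suc_leD[OF iM]])
  also have "\<dots> = (1 - poisson_cdf lam M)
      * (poisson_cdf lam (Suc i) / ?p (Suc i) - poisson_cdf lam i / ?p i)"
    by (simp add: right_diff_distrib mult.commute)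
  also have "\<dots> \<ge> 0"
    using poisson_cdf_le_1[of M] poisson_cdf_ratio_mono[of i] by simp
  finally show ?thesis .
qed

lemma sum_stein_weight_le_1:
  assumes A: "finite A"
  shows "(\<Sum>r\<in>A. poisson_mass lam r * stein_weight lam i r) \<le> 1"
proof -
  have "(\<Sum>r\<in>A. poisson_mass lam r * stein_weight lam i r)
      \<le> (\<Sum>r\<in>A. if r = Suc i then poisson_mass lam (Suc i) * stein_weight lam i (Suc i) else 0)"
    using stein_weight_nonpos lam
    by (intro sum_mono) (auto simp: mult_nonneg_nonpos poisson_mass_nonneg)
  also have "\<dots> \<le> 1"
    using A stein_weight_diag_bounds by (simp add: sum.delta)
  finally show ?thesis .
qed

lemma sum_stein_weight_ge_neg_1:
  assumes A: "finite A"
  shows "(\<Sum>r\<in>A. poisson_mass lam r * stein_weight lam i r) \<ge> -1"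
proof -
  define f where "f r = poisson_mass lam r * stein_weight lam i r" for r
  have f_nonpos: "f r \<le> 0" if "r \<noteq> Suc i" for r
    using stein_weight_nonpos[OF that] lam
    by (simp add: f_def mult_nonneg_nonpos poisson_mass_nonneg)
  have f_diag: "0 \<le> f (Suc i)" "f (Suc i) \<le> 1"
    using stein_weight_diag_bounds by (simp_all add: f_def)
  define M where "M = Max (insert (Suc i) A)"
  have AM: "A - {Suc i} \<subseteq> {..M} - {Suc i}" and iM: "Suc i \<le> M"
    using A by (auto simp: M_def)
  have "sum f {..M} - 1 \<le> sum f ({..M} - {Suc i})"
    using iM f_diag by (simp add: sum_diff1)
  also have "\<dots> = sum f (({..M} - {Suc i}) - (A - {Suc i})) + sum f (A - {Suc i})"
    by (rule sum.subset_diff[OF AM]) simp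
  also have "\<dots> \<le> sum f (A - {Suc i})"
    using sum_nonpos[of "({..M} - {Suc i}) - (A - {Suc i})" f] f_nonpos by auto
  also have "\<dots> \<le> sum f A"
    using A f_diag by (intro sum_mono2) auto
  finally show ?thesis
    using sum_stein_weight_atMost_nonneg[OF iM] unfolding f_def by linarith
qed

end


definition stein_rhs :: "real \<Rightarrow> nat set \<Rightarrow> nat \<Rightarrow> real" where
  "stein_rhs lam A j = of_bool (j \<in> A) - sum (poisson_mass lam) A"

definition stein_cumsum :: "real \<Rightarrow> nat set \<Rightarrow> nat \<Rightarrow> real" where
  "stein_cumsum lam A j = (\<Sum>i\<le>j. stein_rhs lam A i * poisson_mass lam i)"

definition stein_solution :: "real \<Rightarrow> nat set \<Rightarrow> nat \<Rightarrow> real" where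
  "stein_solution lam A j =
     (case j of 0 \<Rightarrow> 0 | Suc i \<Rightarrow> stein_cumsum lam A i / (lam * poisson_mass lam i))"

context
  fixes lam :: real and A :: "nat set"
  assumes lam: "lam > 0" and A: "finite A"
begin

lemma abs_stein_rhs_le_1: "\<bar>stein_rhs lam A j\<bar> \<le> 1"
  using sum_poisson_mass_le_1[of lam A] sum_nonneg[of A "poisson_mass lam"] lam A
  by (simp add: stein_rhs_def poisson_mass_nonneg)

lemma stein_equation:
  "lam * stein_solution lam A (Suc j) - real j * stein_solution lam A j = stein_rhs lam A j"
proof (cases j)
  case 0
  then show ?thesis
    using lam poisson_mass_pos[OF lam, of 0] by (simp add: stein_solution_def stein_cumsum_def)
next
  case (Suc i)
  let ?p = "poisson_mass lam" and ?G = "stein_cumsum lam A"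
  have "lam * stein_solution lam A (Suc j) = ?G (Suc i) / ?p (Suc i)"
    using Suc lam by (simp add: stein_solution_def)
  moreover have "real j * stein_solution lam A j = ?G i / ?p (Suc i)"
    using Suc lam poisson_mass_pos[OF lam, of i]
    by (simp add: stein_solution_def poisson_mass_Suc field_simps del: of_nat_Suc)
  moreover have "?G (Suc i) = ?G i + stein_rhs lam A (Suc i) * ?p (Suc i)"
    by (simp add: stein_cumsum_def)
  ultimately show ?thesis
    using Suc poisson_mass_pos[OF lam, of "Suc i"] by (simp add: add_divide_distrib)
qed

lemma stein_cumsum_eq:
  "stein_cumsum lam A j = (\<Sum>r\<in>A. poisson_mass lam r * (of_bool (r \<le> j) - poisson_cdf lam j))"
proof -
  have "stein_cumsum lam A j
      = (\<Sum>i\<le>j. of_bool (i \<in> A) * poisson_mass lam i) - sum (poisson_mass lam) A * poisson_cdf lam j"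
    by (simp add: stein_cumsum_def stein_rhs_def left_diff_distrib sum_subtractf
        sum_distrib_left poisson_cdf_def)
  also have "(\<Sum>i\<le>j. of_bool (i \<in> A) * poisson_mass lam i)
      = (\<Sum>r\<in>A. of_bool (r \<le> j) * poisson_mass lam r)"
    using A by (simp add: Int_commute atMost_def)
  finally show ?thesis
    by (simp add: right_diff_distrib sum_subtractf sum_distrib_left mult.commute)
qed

lemma stein_solution_increment:
  "lam * (stein_solution lam A (Suc (Suc i)) - stein_solution lam A (Suc i))
     = (\<Sum>r\<in>A. poisson_mass lam r * stein_weight lam i r)"
proof -
  have "lam * (stein_solution lam A (Suc (Suc i)) - stein_solution lam A (Suc i))
      = stein_cumsum lam A (Suc i) / poisson_mass lam (Suc i) - stein_cumsum lam A i / poisson_mass lam i"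
    using lam poisson_mass_pos[OF lam, of i] poisson_mass_pos[OF lam, of "Suc i"]
    by (simp add: stein_solution_def field_simps)
  also have "\<dots> = (\<Sum>r\<in>A. poisson_mass lam r * stein_weight lam i r)"
    unfolding stein_cumsum_eq stein_weight_def
    by (simp add: diff_divide_distrib sum_divide_distrib sum_subtractf right_diff_distrib)
  finally show ?thesis .
qed

lemma abs_stein_solution_increment_le:
  "\<bar>stein_solution lam A (Suc j) - stein_solution lam A j\<bar> \<le> 1 / lam"
proof (cases j)
  case 0
  then have "stein_solution lam A (Suc j) - stein_solution lam A j = stein_rhs lam A 0 / lam"
    using stein_equation[of 0] lam by (simp add: stein_solution_def field_simps)
  then show ?thesis
    using abs_stein_rhs_le_1[of 0] lam by (simp add: abs_divide divide_right_mono)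
next
  case (Suc i)
  then have "\<bar>lam * (stein_solution lam A (Suc j) - stein_solution lam A j)\<bar> \<le> 1"
    using stein_solution_increment[of i] sum_stein_weight_le_1[OF lam A, of i]
      sum_stein_weight_ge_neg_1[OF lam A, of i]
    by simp
  then have "lam * \<bar>stein_solution lam A (Suc j) - stein_solution lam A j\<bar> \<le> 1"
    using lam by (simp only: abs_mult abs_of_pos)
  then show ?thesis
    using lam by (simp add: field_simps)
qed

lemma abs_stein_solution_tail_le:
  assumes AM: "A \<subseteq> {..M}" and N: "M \<le> N"
  shows "\<bar>stein_solution lam A (Suc N)\<bar> \<le> (1 - poisson_cdf lam M) / (lam * poisson_mass lam M)"
proof -
  let ?P = "sum (poisson_mass lam) A"
  have P: "0 \<le> ?P" "?P \<le> 1"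
    using lam A by (auto intro: sum_nonneg sum_poisson_mass_le_1 simp: poisson_mass_nonneg)
  have "stein_cumsum lam A N = ?P * (1 - poisson_cdf lam N)"
    unfolding stein_cumsum_eq sum_distrib_right using AM N by (intro sum.cong) auto
  then have "\<bar>stein_solution lam A (Suc N)\<bar> = ?P * ((1 - poisson_cdf lam N) / poisson_mass lam N) / lam"
    using lam P poisson_mass_pos[OF lam, of N] poisson_cdf_le_1[OF lam, of N]
    by (simp add: stein_solution_def abs_mult abs_divide)
  also have "\<dots> \<le> 1 * ((1 - poisson_cdf lam M) / poisson_mass lam M) / lam"
    using P lam poisson_cdf_le_1[OF lam, of N] poisson_mass_pos[OF lam, of N]
      poisson_tail_ratio_antimono[OF lam N]
    by (intro divide_right_mono mult_mono) auto
  finally show ?thesis by (simp add: mult.commute)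
qed

end


definition poisson_mass_translate :: "real \<Rightarrow> nat \<Rightarrow> nat \<Rightarrow> real" where
  "poisson_mass_translate b k n = (if n < k then 0 else poisson_mass b (n - k))"

lemma poisson_mass_translate_nonneg: "b \<ge> 0 \<Longrightarrow> poisson_mass_translate b k n \<ge> 0"
  by (simp add: poisson_mass_translate_def poisson_mass_nonneg)

lemma poisson_pmf_int_diff_of_nat:
  "poisson_pmf_int b (int n - int k) = poisson_mass_translate b k n"
  by (cases "n < k")
    (simp_all add: poisson_mass_translate_def poisson_pmf_int_neg
      flip: of_nat_diff poisson_pmf_int_of_nat)

lemma poisson_mass_translate_Suc_mult:
  "real (Suc j) * poisson_mass_translate b k (Suc j)
     = b * poisson_mass_translate b k j + real k * poisson_mass_translate b k (Suc j)"
proof (cases "Suc j \<le> k")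
  case False
  define n where "n = j - k"
  have "Suc j - k = Suc n" "real (Suc j) = real k + real (Suc n)"
    using False by (simp_all add: n_def Suc_diff_le)
  then show ?thesis
    using False poisson_mass_Suc_mult[of n b]
    by (simp add: poisson_mass_translate_def n_def distrib_right del: of_nat_Suc)
qed (auto simp: poisson_mass_translate_def)

lemma sums_poisson_mass_translate: "poisson_mass_translate b k sums 1"
proof -
  have "(\<lambda>n. poisson_mass_translate b k (n + k)) sums 1"
    using sums_poisson_mass by (simp add: poisson_mass_translate_def)
  moreover have "(\<Sum>i<k. poisson_mass_translate b k i) = 0"
    by (simp add: poisson_mass_translate_def)
  ultimately show ?thesis
    using sums_iff_shift[of "poisson_mass_translate b k" k 1] by simp
qed

lemma sum_poisson_mass_translate_le_1:
  "b \<ge> 0 \<Longrightarrow> (\<Sum>j\<le>N. poisson_mass_translate b k j) \<le> 1"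
  using sum_le_suminf[of "poisson_mass_translate b k" "{..N}"] sums_poisson_mass_translate[of b k]
  by (auto simp: sums_iff poisson_mass_translate_nonneg)

text \<open>
  Summation by parts: when \<open>g\<close> solves the Stein equation for \<open>Po(b + k)\<close> and \<open>q\<close> satisfies the
  recurrence of \<open>Po(b)\<close> translated by \<open>k\<close>, the Stein identity for \<open>q\<close> fails only by
  \<open>k \<Delta>g\<close> plus a boundary term.
\<close>

lemma sum_stein_by_parts:
  fixes g h q :: "nat \<Rightarrow> real"
  assumes g0: "g 0 = 0"
    and stein: "\<And>j. (b + real k) * g (Suc j) - real j * g j = h j"
    and rec: "\<And>j. real (Suc j) * q (Suc j) = b * q j + real k * q (Suc j)"
  shows "(\<Sum>j\<le>N. h j * q j) = real k * (\<Sum>j\<le>N. q j * (g (Suc j) - g j)) + b * q N * g (Suc N)"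
proof (induction N)
  case 0
  have "h 0 = (b + real k) * g (Suc 0)"
    using stein[of 0] by simp
  then show ?case by (simp add: g0 algebra_simps)
next
  case (Suc N)
  have "h (Suc N) * q (Suc N)
      = (b + real k) * g (Suc (Suc N)) * q (Suc N) - g (Suc N) * (real (Suc N) * q (Suc N))"
    unfolding stein[of "Suc N", symmetric] by (simp add: algebra_simps)
  also have "real (Suc N) * q (Suc N) = b * q N + real k * q (Suc N)"
    by (rule rec)
  finally show ?case
    using Suc.IH by (simp add: algebra_simps)
qed

context
  fixes lam :: real and k :: nat and A :: "nat set"
  assumes lam: "lam > 0" and translate: "lam - real k \<ge> 0" and A: "finite A"
begin

lemma abs_sum_stein_rhs_translate_le:
  "\<bar>\<Sum>j\<le>N. stein_rhs lam A j * poisson_mass_translate (lam - real k) k j\<bar>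
     \<le> real k / lam + (lam - real k) * poisson_mass_translate (lam - real k) k N
          * \<bar>stein_solution lam A (Suc N)\<bar>"
proof -
  let ?q = "poisson_mass_translate (lam - real k) k" and ?g = "stein_solution lam A"
  have q_nonneg: "\<And>j. ?q j \<ge> 0"
    using translate by (simp add: poisson_mass_translate_nonneg)
  have "\<bar>?q j * (?g (Suc j) - ?g j)\<bar> \<le> ?q j * (1 / lam)" for j
    using mult_left_mono[OF abs_stein_solution_increment_le[OF lam A] q_nonneg, of j j]
    by (simp add: abs_mult q_nonneg)
  then have "\<bar>\<Sum>j\<le>N. ?q j * (?g (Suc j) - ?g j)\<bar> \<le> (\<Sum>j\<le>N. ?q j * (1 / lam))"
    by (intro order_trans[OF sum_abs] sum_mono)
  also have "\<dots> \<le> 1 / lam"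
    using sum_poisson_mass_translate_le_1[OF translate, of k N] lam
    by (simp add: sum_divide_distrib[symmetric] divide_right_mono)
  finally have increments: "\<bar>real k * (\<Sum>j\<le>N. ?q j * (?g (Suc j) - ?g j))\<bar> \<le> real k / lam"
    using mult_left_mono[of _ "1 / lam" "real k"] by (simp add: abs_mult)
  have "(\<Sum>j\<le>N. stein_rhs lam A j * ?q j)
      = real k * (\<Sum>j\<le>N. ?q j * (?g (Suc j) - ?g j)) + (lam - real k) * ?q N * ?g (Suc N)"
    using stein_equation[OF lam A] poisson_mass_translate_Suc_mult
    by (intro sum_stein_by_parts) (simp_all add: stein_solution_def)
  then have "\<bar>\<Sum>j\<le>N. stein_rhs lam A j * ?q j\<bar>
      \<le> \<bar>real k * (\<Sum>j\<le>N. ?q j * (?g (Suc j) - ?g j))\<bar> + \<bar>(lam - real k) * ?q N * ?g (Suc N)\<bar>"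
    by (simp only: abs_triangle_ineq)
  also have "\<bar>(lam - real k) * ?q N * ?g (Suc N)\<bar> = (lam - real k) * ?q N * \<bar>?g (Suc N)\<bar>"
    using translate q_nonneg[of N] by (simp add: abs_mult)
  finally show ?thesis
    using increments by linarith
qed

lemma poisson_translate_prob_diff_le:
  "\<bar>(\<Sum>r\<in>A. poisson_mass_translate (lam - real k) k r) - sum (poisson_mass lam) A\<bar> \<le> real k / lam"
proof -
  let ?q = "poisson_mass_translate (lam - real k) k" and ?P = "sum (poisson_mass lam) A"
  define M where "M = Max (insert 0 A)"
  have AM: "A \<subseteq> {..M}" using A by (auto simp: M_def)
  define C where "C = (1 - poisson_cdf lam M) / (lam * poisson_mass lam M)"
  have "(\<lambda>N. \<bar>(\<Sum>r\<in>A. ?q r) - ?P * (\<Sum>j\<le>N. ?q j)\<bar>) \<longlonglongrightarrow> \<bar>(\<Sum>r\<in>A. ?q r) - ?P * 1\<bar>"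
    using sums_poisson_mass_translate unfolding sums_def_le by (intro tendsto_intros)
  moreover have "(\<lambda>N. real k / lam + (lam - real k) * C * ?q N) \<longlonglongrightarrow> real k / lam + (lam - real k) * C * 0"
    using sums_poisson_mass_translate summable_LIMSEQ_zero sums_summable
    by (intro tendsto_intros) blast
  moreover have "\<bar>(\<Sum>r\<in>A. ?q r) - ?P * (\<Sum>j\<le>N. ?q j)\<bar> \<le> real k / lam + (lam - real k) * C * ?q N"
    if N: "M \<le> N" for N
  proof -
    have "A \<subseteq> {..N}" using AM N by auto
    then have "(\<Sum>j\<le>N. stein_rhs lam A j * ?q j) = (\<Sum>r\<in>A. ?q r) - ?P * (\<Sum>j\<le>N. ?q j)"
      by (simp add: stein_rhs_def left_diff_distrib sum_subtractf sum_distrib_left Int_absorb1)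
    moreover have "(lam - real k) * ?q N * \<bar>stein_solution lam A (Suc N)\<bar> \<le> (lam - real k) * ?q N * C"
      unfolding C_def using abs_stein_solution_tail_le[OF lam A AM N] translate
      by (intro mult_left_mono mult_nonneg_nonneg poisson_mass_translate_nonneg) auto
    ultimately show ?thesis
      using abs_sum_stein_rhs_translate_le[of N] by (simp add: mult_ac)
  qed
  ultimately have "\<bar>(\<Sum>r\<in>A. ?q r) - ?P * 1\<bar> \<le> real k / lam + (lam - real k) * C * 0"
    by (intro tendsto_le[OF trivial_limit_sequentially]) (auto simp: eventually_sequentially)
  then show ?thesis by simp
qed

end

lemma sum_abs_poisson_translate_le:
  assumes lam: "lam > 0" and translate: "lam - real k \<ge> 0" and F: "finite F"
  shows "(\<Sum>i\<in>F. \<bar>poisson_pmf_int lam i - poisson_pmf_int (lam - real k) (i - int k)\<bar>) \<le> 2 * real k / lam"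
proof (rule sum_int_le_of_nat_partial_sums[OF _ _ _ F])
  fix N
  let ?p = "poisson_mass lam" and ?q = "poisson_mass_translate (lam - real k) k"
  define A where "A = {n\<in>{..N}. ?p n \<le> ?q n}"
  define B where "B = {..N} - A"
  have fin: "finite A" "finite B" and split: "{..N} = A \<union> B" "A \<inter> B = {}"
    by (auto simp: A_def B_def)
  have "(\<Sum>n\<le>N. \<bar>poisson_pmf_int lam (int n) - poisson_pmf_int (lam - real k) (int n - int k)\<bar>)
      = (\<Sum>n\<in>A. \<bar>?p n - ?q n\<bar>) + (\<Sum>n\<in>B. \<bar>?p n - ?q n\<bar>)"
    unfolding poisson_pmf_int_of_nat poisson_pmf_int_diff_of_nat split(1)
    using fin split(2) by (rule sum.union_disjoint)
  also have "\<dots> = (\<Sum>n\<in>A. ?q n - ?p n) + (\<Sum>n\<in>B. ?p n - ?q n)"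
    by (intro arg_cong2[where f = "(+)"] sum.cong) (auto simp: A_def B_def)
  also have "\<dots> \<le> real k / lam + real k / lam"
    using poisson_translate_prob_diff_le[OF lam translate fin(1)]
      poisson_translate_prob_diff_le[OF lam translate fin(2)]
    by (intro add_mono) (simp_all add: sum_subtractf)
  finally show "(\<Sum>n\<le>N. \<bar>poisson_pmf_int lam (int n) - poisson_pmf_int (lam - real k) (int n - int k)\<bar>)
      \<le> 2 * real k / lam" by simp
qed (auto simp: poisson_pmf_int_neg)


lemma two_mult_diff_one_le_mult_sqrt: assumes s: "s > 0" shows "2 * (s - 1) \<le> s * sqrt s"
proof -
  define t where "t = sqrt s"
  have t0: "t \<ge> 0" and st: "s = t^2" using s by (auto simp: t_def)
  have "t^3 - 2*t^2 + 2 = (t - 4/3)^2 * (t + 2/3) + 22/27" by (simp add: power2_eq_square power3_eq_cube field_simps)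
  moreover have "(t - 4/3)^2 * (t + 2/3) \<ge> 0" using t0 by simp
  ultimately have "t^3 - 2*t^2 + 2 \<ge> 0" by linarith
  then show ?thesis unfolding st t_def[symmetric] using t0 by (simp add: power2_eq_square power3_eq_cube algebra_simps)
qed

lemma four_mult_diff_one_le_three_mult_sqrt: assumes s: "s > 0" shows "4 * (s - 1) \<le> 3 * (s * sqrt s)"
proof -
  define t where "t = sqrt s"
  have t0: "t \<ge> 0" and st: "s = t^2" using s by (auto simp: t_def)
  have "3 * t^3 - 4*t^2 + 4 = 3 * ((t - 8/9)^2 * (t + 4/9)) + (4 - 256/243)" by (simp add: power2_eq_square power3_eq_cube field_simps)
  moreover have "(t - 8/9)^2 * (t + 4/9) \<ge> 0" using t0 by simp
  ultimately have "3 * t^3 - 4*t^2 + 4 \<ge> 0" by linarith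
  then show ?thesis unfolding st t_def[symmetric] using t0 by (simp add: power2_eq_square power3_eq_cube algebra_simps)
qed

lemma add_divide_add_le:
  fixes s u d x :: real
  assumes s: "s > 0" and x: "x \<ge> 0" and d: "d \<ge> 0" and u: "0 \<le> u" "u < 1 + d"
  shows "(x + u) / (s + u) \<le> (x + 1) / s + d / (2 * sqrt s)"
proof (cases "s \<le> x + 1")
  case True
  have "u * (s - x - 1) \<le> 0" using True u by (simp add: mult_nonneg_nonpos)
  then have "(x + u) / (s + u) \<le> (x + 1) / s"
    using s u by (simp add: divide_simps algebra_simps)
  moreover have "d / (2 * sqrt s) \<ge> 0" using d s by simp
  ultimately show ?thesis by linarith
next
  case False
  have ss: "sqrt s > 0" using s by simp
  have "u * (s - x - 1) \<le> (1 + d) * (s - x - 1)"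
    using u False by (intro mult_right_mono) auto
  then have "s * (x + u) - (x + 1) * (s + u) \<le> d * (s - 1)"
    using mult_nonneg_nonneg[OF d x] x by (simp add: algebra_simps; linarith)
  also have "d * (s - 1) \<le> d * (s * sqrt s / 2)"
    using two_mult_diff_one_le_mult_sqrt[OF s] d by (intro mult_left_mono) auto
  also have "d * (s * sqrt s / 2) = d * s * s / (2 * sqrt s)"
    using s ss by (simp add: field_simps)
  also have "\<dots> \<le> d * s * (s + u) / (2 * sqrt s)"
    using d s u ss by (intro divide_right_mono mult_left_mono) auto
  finally have "s * (x + u) / (s * (s + u))
      \<le> ((x + 1) * (s + u) + d * s * (s + u) / (2 * sqrt s)) / (s * (s + u))"
    using s u by (intro divide_right_mono) auto
  then show ?thesis using s u ss by (simp add: add_divide_distrib)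
qed

lemma divide_sqrt_add_le_twice:
  fixes s v D :: real
  assumes s: "s > 0" and D: "D \<ge> 0" and small: "D / sqrt s + 1 / s < 1" and v: "- D \<le> v"
    and sv: "s + v > 0"
  shows "D / sqrt (s + v) \<le> 2 * (D / sqrt s)"
proof -
  have ss: "sqrt s > 0" using s by simp
  have "D / sqrt s < 1 - 1 / s" using small by simp
  then have "D / sqrt s * s < (1 - 1 / s) * s" using s by (intro mult_strict_right_mono) auto
  moreover have "(1 - 1 / s) * s = s - 1" "D / sqrt s * s = D * sqrt s"
    using s ss by (simp_all add: field_simps)
  ultimately have "4 * (D * sqrt s) < 4 * (s - 1)" by simp
  also have "\<dots> \<le> 3 * (s * sqrt s)"
    by (rule four_mult_diff_one_le_three_mult_sqrt[OF s])
  finally have "D < 3 * s / 4" using ss by (simp add: algebra_simps)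
  then have "sqrt s \<le> sqrt (4 * (s + v))" using v by simp
  also have "sqrt (4 * (s + v)) = 2 * sqrt (s + v)"
    by (simp only: real_sqrt_mult real_sqrt_four)
  finally have "sqrt s \<le> 2 * sqrt (s + v)" .
  then have "D / sqrt (s + v) \<le> D / (sqrt s / 2)"
    using D ss sv by (intro divide_left_mono) auto
  then show ?thesis by (simp add: mult.commute)
qed

lemma rate_translate_bound_arith_nonneg:
  fixes s d1 d2 d k x :: real
  assumes s: "s > 0" and d1: "0 \<le> d1" "d1 < 1" and d2: "0 \<le> d2" and d: "d \<ge> 0"
    and k: "k = x + d1 - d2 + d"
  shows "d / sqrt (s + d1) + 2 * k / (s + d1 + d) \<le> 2 * (d / sqrt s + (\<bar>x\<bar> + 1) / s)"
proof -
  have "k / (s + (d1 + d)) \<le> (\<bar>x\<bar> + (d1 + d)) / (s + (d1 + d))"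
    using k d2 s d1 d by (intro divide_right_mono) auto
  also have "\<dots> \<le> (\<bar>x\<bar> + 1) / s + d / (2 * sqrt s)"
    using s d d1 by (intro add_divide_add_le) auto
  finally have "2 * (k / (s + (d1 + d))) \<le> 2 * ((\<bar>x\<bar> + 1) / s + d / (2 * sqrt s))"
    by (rule mult_left_mono) simp
  moreover have "2 * (k / (s + (d1 + d))) = 2 * k / (s + d1 + d)"
    and "2 * ((\<bar>x\<bar> + 1) / s + d / (2 * sqrt s)) = 2 * ((\<bar>x\<bar> + 1) / s) + d / sqrt s"
    by (simp_all add: add.assoc distrib_left)
  moreover have "d / sqrt (s + d1) \<le> d / sqrt s"
    using s d d1 by (intro divide_left_mono) auto
  ultimately show ?thesis by argo
qed

lemma rate_translate_bound_arith_neg: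
  fixes s d1 d2 d k x :: real
  assumes s: "s > 0" and d1: "0 \<le> d1" "d1 < 1" and d2: "0 \<le> d2" and d: "d < 0"
    and k: "k = x + d1 - d2 + d" and L: "s + d1 + d > 0"
    and R: "\<bar>d\<bar> / sqrt s + (\<bar>x\<bar> + 1) / s < 1"
  shows "\<bar>d\<bar> / sqrt (s + d1 + d) + 2 * k / (s + d1 + d) \<le> 2 * (\<bar>d\<bar> / sqrt s + (\<bar>x\<bar> + 1) / s)"
proof -
  define v where "v = d1 + d"
  have L': "s + v > 0" using L by (simp add: v_def add.assoc)
  have split_R: "(\<bar>x\<bar> + 1) / s = \<bar>x\<bar> / s + 1 / s"
    by (simp add: add_divide_distrib)
  have "\<bar>d\<bar> / sqrt s \<ge> 0" "\<bar>x\<bar> / s \<ge> 0" using s by simp_all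
  then have small: "\<bar>d\<bar> / sqrt s + 1 / s < 1" and "(\<bar>x\<bar> + 1) / s < 1"
    using R split_R by linarith+
  then have x: "\<bar>x\<bar> + 1 < s" using s by (simp add: divide_simps)
  have "v * (s - \<bar>x\<bar> - 1) \<le> s"
  proof (cases "v \<ge> 0")
    case True
    then have "v * (s - \<bar>x\<bar> - 1) \<le> 1 * (s - \<bar>x\<bar> - 1)"
      using d1 d x by (intro mult_right_mono) (auto simp: v_def)
    then show ?thesis by simp
  next
    case False
    then have "v * (s - \<bar>x\<bar> - 1) \<le> 0" using x by (simp add: mult_nonpos_nonneg)
    then show ?thesis using s by simp
  qed
  then have x_v: "(\<bar>x\<bar> + v) / (s + v) \<le> (\<bar>x\<bar> + 1) / s"
    using s L' by (simp add: divide_simps algebra_simps)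
  have "k \<le> \<bar>x\<bar> + v"
    using k d2 abs_ge_self[of x] by (simp add: v_def)
  then have "k / (s + v) \<le> (\<bar>x\<bar> + v) / (s + v)"
    using L' by (intro divide_right_mono) auto
  also note x_v
  finally have "2 * (k / (s + v)) \<le> 2 * ((\<bar>x\<bar> + 1) / s)"
    by (rule mult_left_mono) simp
  moreover have "\<bar>d\<bar> / sqrt (s + v) \<le> 2 * (\<bar>d\<bar> / sqrt s)"
    using s L' d d1 small by (intro divide_sqrt_add_le_twice) (auto simp: v_def)
  moreover have "2 * (k / (s + v)) = 2 * k / (s + v)"
    by simp
  moreover have "s + d1 + d = s + v"
    by (simp add: v_def)
  ultimately show ?thesis by (simp only:) argo
qed

lemma sum_abs_poisson_diff_le_2:
  assumes "a \<ge> 0" and "b \<ge> 0" and "finite G"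
  shows "(\<Sum>i\<in>G. \<bar>poisson_pmf_int a i - poisson_pmf_int b (i - m)\<bar>) \<le> 2"
proof -
  have "(\<Sum>i\<in>G. \<bar>poisson_pmf_int a i - poisson_pmf_int b (i - m)\<bar>)
      \<le> (\<Sum>i\<in>G. poisson_pmf_int a i + poisson_pmf_int b (i - m))"
    using assms by (intro sum_mono order_trans[OF abs_triangle_ineq4])
      (simp add: poisson_pmf_int_nonneg)
  also have "\<dots> = (\<Sum>i\<in>G. poisson_pmf_int a i) + (\<Sum>i\<in>(\<lambda>i. i - m) ` G. poisson_pmf_int b i)"
    by (simp add: sum.distrib sum.reindex inj_on_def)
  also have "\<dots> \<le> 1 + 1"
    using assms by (intro add_mono sum_poisson_pmf_int_le_1) auto
  finally show ?thesis by simp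
qed

lemma sum_abs_poisson_translate_pair_le:
  assumes s1: "s1 > 0" and s2: "s2 > 0" and l1: "s1 \<le> l1" "l1 < s1 + 1" and l2: "s2 \<le> l2" "l2 < s2 + 1"
    and k: "l1 + d = l2 + real k" and G: "finite G"
  shows "(\<Sum>i\<in>G. \<bar>poisson_pmf_int l1 i - poisson_pmf_int l2 (i - int k)\<bar>)
           \<le> 2 * (\<bar>d\<bar> / sqrt s1 + (\<bar>s1 - s2\<bar> + 1) / s1)"
proof -
  let ?T = "\<Sum>i\<in>G. \<bar>poisson_pmf_int l1 i - poisson_pmf_int l2 (i - int k)\<bar>"
  have l2_eq: "l2 = l1 + d - real k" and pos: "l1 > 0" "l2 > 0" "l1 + d > 0"
    using k s1 s2 l1 l2 by auto
  have kx: "real k = (s1 - s2) + (l1 - s1) - (l2 - s2) + d"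
    using k by simp
  have "?T \<le> (\<Sum>i\<in>G. \<bar>poisson_pmf_int l1 i - poisson_pmf_int (l1 + d) i\<bar>
      + \<bar>poisson_pmf_int (l1 + d) i - poisson_pmf_int (l1 + d - real k) (i - int k)\<bar>)"
    unfolding l2_eq by (intro sum_mono) linarith
  also have "\<dots> \<le> \<bar>d\<bar> / sqrt (min l1 (l1 + d)) + 2 * real k / (l1 + d)"
    unfolding sum.distrib using pos G l2_eq
    by (intro add_mono sum_abs_poisson_rate_change_le sum_abs_poisson_translate_le) auto
  finally have core: "?T \<le> \<bar>d\<bar> / sqrt (min l1 (l1 + d)) + 2 * real k / (l1 + d)" .
  consider "d \<ge> 0" | "d < 0" "\<bar>d\<bar> / sqrt s1 + (\<bar>s1 - s2\<bar> + 1) / s1 < 1"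
    | "\<bar>d\<bar> / sqrt s1 + (\<bar>s1 - s2\<bar> + 1) / s1 \<ge> 1"
    by linarith
  then show ?thesis
  proof cases
    case 1
    then show ?thesis
      using core rate_translate_bound_arith_nonneg[OF s1 _ _ _ 1 kx] l1 l2 by (simp add: min_def)
  next
    case 2
    then show ?thesis
      using core rate_translate_bound_arith_neg[OF s1 _ _ _ 2(1) kx _ 2(2)] l1 l2 pos
      by (simp add: min_def)
  next
    case 3
    then show ?thesis
      using sum_abs_poisson_diff_le_2[of l1 l2 G "int k"] pos G by argo
  qed
qed

lemma tv_norm_le_of_finite_sums:
  assumes "\<And>F. finite F \<Longrightarrow> (\<Sum>j\<in>F. \<bar>Q j - Q' j\<bar>) \<le> R" and "R \<ge> 0"
  shows "tv_norm Q Q' \<le> R"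
proof (cases "(\<lambda>j. \<bar>Q j - Q' j\<bar>) summable_on UNIV")
  case True
  then show ?thesis
    unfolding tv_norm_def using assms(1) by (rule infsum_le_finite_sums)
next
  case False
  then show ?thesis
    unfolding tv_norm_def using assms(2) by (simp add: infsum_not_exists)
qed

lemma tp_lambda'_bounds: "s \<le> tp_lambda' mu s" "tp_lambda' mu s < s + 1"
  unfolding tp_lambda'_def tp_delta_def tp_gamma_def by linarith+

lemma tp_lambda'_add_tp_gamma: "tp_lambda' mu s + real_of_int (tp_gamma mu s) = mu"
  by (simp add: tp_lambda'_def tp_delta_def)

theorem lemma2p1:
  fixes mu1 mu2 s1 s2 :: real
  assumes "s1 > 0" and "s2 > 0"
    and "\<lfloor>mu1 - s1\<rfloor> \<le> \<lfloor>mu2 - s2\<rfloor>"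
  shows "tv_norm (TP mu1 s1) (TP mu2 s2)
           \<le> 2 * (\<bar>mu1 - mu2\<bar> / sqrt s1 + (\<bar>s1 - s2\<bar> + 1) / s1)"
proof (rule tv_norm_le_of_finite_sums)
  define k where "k = nat (tp_gamma mu2 s2 - tp_gamma mu1 s1)"
  have k_int: "int k = tp_gamma mu2 s2 - tp_gamma mu1 s1"
    using assms(3) by (simp add: k_def tp_gamma_def)
  have k: "tp_lambda' mu1 s1 + (mu2 - mu1) = tp_lambda' mu2 s2 + real k"
    using tp_lambda'_add_tp_gamma[of mu1 s1] tp_lambda'_add_tp_gamma[of mu2 s2]
      arg_cong[OF k_int, of real_of_int]
    by simp
  fix F :: "int set"
  assume "finite F"
  have "(\<Sum>j\<in>F. \<bar>TP mu1 s1 j - TP mu2 s2 j\<bar>)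
      = (\<Sum>i\<in>(\<lambda>j. j - tp_gamma mu1 s1) ` F.
           \<bar>poisson_pmf_int (tp_lambda' mu1 s1) i - poisson_pmf_int (tp_lambda' mu2 s2) (i - int k)\<bar>)"
    unfolding TP_def k_int by (subst sum.reindex) (auto simp: inj_on_def algebra_simps)
  also have "\<dots> \<le> 2 * (\<bar>mu2 - mu1\<bar> / sqrt s1 + (\<bar>s1 - s2\<bar> + 1) / s1)"
    using \<open>finite F\<close>
    by (intro sum_abs_poisson_translate_pair_le assms(1,2) k tp_lambda'_bounds) simp
  finally show "(\<Sum>j\<in>F. \<bar>TP mu1 s1 j - TP mu2 s2 j\<bar>) \<le> 2 * (\<bar>mu1 - mu2\<bar> / sqrt s1 + (\<bar>s1 - s2\<bar> + 1) / s1)"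
    by (simp add: abs_minus_commute)
next
  show "0 \<le> 2 * (\<bar>mu1 - mu2\<bar> / sqrt s1 + (\<bar>s1 - s2\<bar> + 1) / s1)"
    using assms(1) by simp
qed

end
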